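(* Let $\gamma_a,\gamma_s>0$, $\sigma_B>0$, $q>0$, $\lambda>0$, $\varepsilon_a\in(0,2)$, and let $\beta_s$ be the piecewise linear coalbedo described in the context. Then the system \[ \gamma_a T_a'=-\lambda(T_a-T_s)+\varepsilon_a\sigma_B|T_s|^3T_s-2\varepsilon_a\sigma_B|T_a|^3T_a,\qquad \gamma_s T_s'=-\lambda(T_s-T_a)-\sigma_B|T_s|^3T_s+\varepsilon_a\sigma_B|T_a|^3T_a+q\beta_s(T_s) \] has at most finitely many equilibrium points.
   Context: The coalbedo is $\beta_s(T)=\beta_{s,-}$ for $T\le T_{s,-}$, $\beta_s(T)=\beta_{s,-}+(\beta_{s,+}-\beta_{s,-})\frac{T-T_{s,-}}{T_{s,+}-T_{s,-}}$ for $T\in[T_{s,-},T_{s,+}]$, and $\beta_s(T)=\beta_{s,+}$ for $T\ge T_{s,+}$, where $T_{s,+}>T_{s,-}>0$ and $\beta_{s,+}>\beta_{s,-}>0$. An equilibrium point is a point $(T_a,T_s)\in[0,\infty)^2$ at which both right-hand sides vanish. *)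

theory Defs
  imports Complex_Main
begin

definition coalbedo :: "real \<Rightarrow> real \<Rightarrow> real \<Rightarrow> real \<Rightarrow> real \<Rightarrow> real" where
  "coalbedo Tm Tp bm bp T =
     (if T \<le> Tm then bm
      else if T \<le> Tp then bm + (bp - bm) * (T - Tm) / (Tp - Tm)
      else bp)"

text \<open>Right-hand sides of the system (the equations gamma_a T_a' = F_a, gamma_s T_s' = F_s).\<close>
definition F_a :: "real \<Rightarrow> real \<Rightarrow> real \<Rightarrow> real \<Rightarrow> real \<Rightarrow> real" where
  "F_a lam eps sB Ta Ts =
     - lam * (Ta - Ts) + eps * sB * \<bar>Ts\<bar>^3 * Ts - 2 * eps * sB * \<bar>Ta\<bar>^3 * Ta"

definition F_s :: "real \<Rightarrow> real \<Rightarrow> real \<Rightarrow> real \<Rightarrow> (real \<Rightarrow> real) \<Rightarrow> real \<Rightarrow> real \<Rightarrow> real" where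
  "F_s lam eps sB q beta Ta Ts =
     - lam * (Ts - Ta) - sB * \<bar>Ts\<bar>^3 * Ts + eps * sB * \<bar>Ta\<bar>^3 * Ta + q * beta Ts"

end

theory Submission
  imports Defs "HOL-Computational_Algebra.Polynomial"
begin

text \<open>
  On the closed quadrant |T|^3 T = T^4. Adding the two equilibrium equations gives
  eps sigma T_a^4 = (eps - 1) sigma T_s^4 + q beta(T_s), and substituting this back into the
  first one expresses lambda T_a as an explicit function of T_s. Hence T_s determines T_a, and
  raising the second relation to the fourth power and comparing with the first leaves a single
  equation for T_s. On each of the three pieces where beta is affine, that equation is a polynomial
  identity of degree 16 against degree at most 4, so it has only finitely many solutions.
\<close>

lemma finite_poly_eq_poly_if_degree_less:
  fixes p q :: "'a::idom poly"
  assumes "degree p < degree q"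
  shows "finite {x. poly p x = poly q x}"
proof -
  have "q - p \<noteq> 0"
    using assms by auto
  then have "finite {x. poly (q - p) x = 0}"
    by (rule poly_roots_finite)
  moreover have "{x. poly p x = poly q x} = {x. poly (q - p) x = 0}"
    by auto
  ultimately show ?thesis
    by simp
qed

lemma finite_quartic_eq_power4_quartic:
  fixes K c A B C D E :: real
  assumes "K \<noteq> 0" and "c \<noteq> 0"
  shows "finite {t. A*t^4 + B*t + C = K*(c*t^4 + D*t + E)^4}"
proof -
  define P where "P = [:C, B, 0, 0, A:]"
  define Q where "Q = [:E, D, 0, 0, c:]"
  have "degree Q = 4" and "Q \<noteq> 0"
    using \<open>c \<noteq> 0\<close> unfolding Q_def by auto
  then have "degree (smult K (Q^4)) = 16"
    using \<open>K \<noteq> 0\<close> by (simp add: degree_power_eq)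
  moreover have "degree P \<le> 4"
    unfolding P_def by simp
  ultimately have "finite {t. poly P t = poly (smult K (Q^4)) t}"
    by (intro finite_poly_eq_poly_if_degree_less) simp
  moreover have "poly P t = A*t^4 + B*t + C" and "poly Q t = c*t^4 + D*t + E" for t
    unfolding P_def Q_def by (simp_all add: algebra_simps power4_eq_xxxx)
  ultimately show ?thesis
    by simp
qed

lemma coalbedo_affine_pieces:
  fixes Tm Tp bm bp T :: real
  defines "s \<equiv> (bp - bm) / (Tp - Tm)"
  obtains b0 b1 where "(b0, b1) \<in> {(bm, 0), (bp, 0), (bm - s*Tm, s)}"
    and "coalbedo Tm Tp bm bp T = b0 + b1*T"
proof -
  have "(bp - bm) * (T - Tm) / (Tp - Tm) = s * (T - Tm)"
    unfolding s_def by simp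
  then have "bm + (bp - bm) * (T - Tm) / (Tp - Tm) = (bm - s*Tm) + s*T"
    by (simp add: algebra_simps)
  then show ?thesis
    using that[of bm 0] that[of bp 0] that[of "bm - s*Tm" s] unfolding coalbedo_def
    by (cases "T \<le> Tm"; cases "T \<le> Tp") simp_all
qed

lemma finite_reduced_equilibrium_eq_affine:
  fixes lam e s q b0 b1 :: real
  assumes "e*s \<noteq> 0" and "s*(2 - e) \<noteq> 0"
  shows "finite {t. lam^4*((e - 1)*s*t^4 + q*(b0 + b1*t))
                  = e*s*(lam*t + s*(2 - e)*t^4 - 2*q*(b0 + b1*t))^4}"
proof -
  have "finite {t. (lam^4*(e - 1)*s)*t^4 + (lam^4*q*b1)*t + lam^4*q*b0
                  = (e*s)*((s*(2 - e))*t^4 + (lam - 2*q*b1)*t + (-2*q*b0))^4}"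
    using assms by (rule finite_quartic_eq_power4_quartic)
  then show ?thesis
    by (simp add: algebra_simps)
qed

lemma finite_reduced_equilibrium_eq_coalbedo:
  fixes lam e s q Tm Tp bm bp :: real
  assumes "e*s \<noteq> 0" and "s*(2 - e) \<noteq> 0"
  shows "finite {t. lam^4*((e - 1)*s*t^4 + q*coalbedo Tm Tp bm bp t)
                  = e*s*(lam*t + s*(2 - e)*t^4 - 2*q*coalbedo Tm Tp bm bp t)^4}"
    (is "finite {t. ?red (coalbedo Tm Tp bm bp) t}")
proof -
  let ?pieces = "{(bm, 0), (bp, 0), (bm - (bp - bm) / (Tp - Tm) * Tm, (bp - bm) / (Tp - Tm))}"
  have "{t. ?red (coalbedo Tm Tp bm bp) t}
          \<subseteq> (\<Union>(b0, b1) \<in> ?pieces. {t. ?red (\<lambda>t. b0 + b1*t) t})"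
  proof
    fix t
    assume "t \<in> {t. ?red (coalbedo Tm Tp bm bp) t}"
    moreover obtain b0 b1 where "(b0, b1) \<in> ?pieces" and "coalbedo Tm Tp bm bp t = b0 + b1*t"
      by (rule coalbedo_affine_pieces)
    ultimately show "t \<in> (\<Union>(b0, b1) \<in> ?pieces. {t. ?red (\<lambda>t. b0 + b1*t) t})"
      by auto
  qed
  moreover have "finite (\<Union>(b0, b1) \<in> ?pieces. {t. ?red (\<lambda>t. b0 + b1*t) t})"
    using assms by (intro finite_UN_I) (auto intro: finite_reduced_equilibrium_eq_affine)
  ultimately show ?thesis
    by (rule finite_subset)
qed

lemma equilibrium_reduction:
  fixes lam e s q a t :: real and beta :: "real \<Rightarrow> real"
  assumes "lam \<noteq> 0" and "0 \<le> a" and "0 \<le> t"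
    and "F_a lam e s a t = 0" and "F_s lam e s q beta a t = 0"
  shows "a = t + (s*(2 - e)*t^4 - 2*q*beta t) / lam"
    and "lam^4*((e - 1)*s*t^4 + q*beta t) = e*s*(lam*t + s*(2 - e)*t^4 - 2*q*beta t)^4"
proof -
  have "- lam*(a - t) + e*s*t^4 - 2*e*s*a^4 = 0"
    and "- lam*(t - a) - s*t^4 + e*s*a^4 + q*beta t = 0"
    using assms(2-5) unfolding F_a_def F_s_def
    by (simp_all add: abs_of_nonneg power4_eq_xxxx power3_eq_cube mult.assoc)
  then have atm: "lam*a = lam*t + e*s*t^4 - 2*e*s*a^4"
    and sum: "e*s*a^4 = (e - 1)*s*t^4 + q*beta t"
    by (simp_all add: algebra_simps)
  have lin: "lam*a = lam*t + s*(2 - e)*t^4 - 2*q*beta t"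
    using atm sum by (simp add: algebra_simps)
  then show "a = t + (s*(2 - e)*t^4 - 2*q*beta t) / lam"
    using \<open>lam \<noteq> 0\<close> by (simp add: field_simps)
  have "lam^4*((e - 1)*s*t^4 + q*beta t) = e*s*(lam*a)^4"
    by (simp add: sum [symmetric] power_mult_distrib)
  then show "lam^4*((e - 1)*s*t^4 + q*beta t) = e*s*(lam*t + s*(2 - e)*t^4 - 2*q*beta t)^4"
    by (simp only: lin)
qed

theorem lemma6p2:
  fixes gamma_a gamma_s sigma_B q lam eps_a Tm Tp bm bp :: real
  assumes "gamma_a > 0" and "gamma_s > 0" and "sigma_B > 0" and "q > 0" and "lam > 0"
    and "0 < eps_a" and "eps_a < 2"
    and "0 < Tm" and "Tm < Tp" and "0 < bm" and "bm < bp"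
  shows "finite {(Ta, Ts). 0 \<le> Ta \<and> 0 \<le> Ts \<and>
            F_a lam eps_a sigma_B Ta Ts = 0 \<and>
            F_s lam eps_a sigma_B q (coalbedo Tm Tp bm bp) Ta Ts = 0}"
    (is "finite ?S")
proof -
  let ?beta = "coalbedo Tm Tp bm bp" and ?e = eps_a and ?s = sigma_B
  let ?Ts = "{t. lam^4*((?e - 1)*?s*t^4 + q*?beta t)
                  = ?e*?s*(lam*t + ?s*(2 - ?e)*t^4 - 2*q*?beta t)^4}"
  let ?Ta = "\<lambda>t. t + (?s*(2 - ?e)*t^4 - 2*q*?beta t) / lam"
  have "finite ?Ts"
    using assms by (intro finite_reduced_equilibrium_eq_coalbedo) auto
  moreover have "?S \<subseteq> (\<lambda>t. (?Ta t, t)) ` ?Ts"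
  proof clarify
    fix a t
    assume "0 \<le> a" "0 \<le> t" "F_a lam ?e ?s a t = 0" "F_s lam ?e ?s q ?beta a t = 0"
    then have "a = ?Ta t" and "t \<in> ?Ts"
      using \<open>lam > 0\<close> by (simp_all add: equilibrium_reduction)
    then show "(a, t) \<in> (\<lambda>t. (?Ta t, t)) ` ?Ts"
      by auto
  qed
  ultimately show ?thesis
    by (meson finite_imageI finite_subset)
qed

end
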